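(* Let $X$ be a maximal space, $A\subseteq X$ and $x\in X$. If $x\in\overline{A}\setminus A$, then there is $B\subseteq A$ with no isolated points (in its subspace topology) such that $x\in\overline{B}$.
   Context: Spaces are countable $T_1$ topological spaces. A space is maximal if it is dense-in-itself (has no isolated points) and every strictly finer topology on it has an isolated point. *)

theory Defs
  imports "HOL-Analysis.Analysis"
begin

definition isolated_point :: "'a topology \<Rightarrow> 'a \<Rightarrow> bool" where
  "isolated_point X x \<longleftrightarrow> x \<in> topspace X \<and> openin X {x}"

definition dense_in_itself :: "'a topology \<Rightarrow> bool" where
  "dense_in_itself X \<longleftrightarrow> (\<forall>x\<in>topspace X. \<not> isolated_point X x)"

definition finer_topology :: "'a topology \<Rightarrow> 'a topology \<Rightarrow> bool" where
  "finer_topology T X \<longleftrightarrow> topspace T = topspace X \<and> (\<forall>U. openin X U \<longrightarrow> openin T U)"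

definition maximal_space :: "'a topology \<Rightarrow> bool" where
  "maximal_space X \<longleftrightarrow> dense_in_itself X \<and>
     (\<forall>T. finer_topology T X \<and> T \<noteq> X \<longrightarrow> (\<exists>x. isolated_point T x))"

end

theory Submission
  imports Defs
begin

text \<open>In a maximal space every non-closed set S has nonempty interior: making the complement
  of S open yields a strictly finer topology, which must have an isolated point p. Since
  X has none, p lies outside S and some X-open V \<ni> p meets S only in p; by T1,
  V - {p} is then a nonempty open subset of S. If x \<in> cl A - A, this applies to A \<inter> W
  for every open W \<ni> x, so x lies in the closure of the interior of A, and an open
  subspace of a dense-in-itself space is dense-in-itself.\<close>

text \<open>The simple extension of X by E, i.e. the coarsest topology finer than X in which E is open.\<close>
definition simple_extension :: "'a topology \<Rightarrow> 'a set \<Rightarrow> 'a topology" where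
  "simple_extension X E = topology (\<lambda>U. U \<subseteq> topspace X \<and>
     (\<forall>p\<in>U. \<exists>V. openin X V \<and> p \<in> V \<and> (if p \<in> E then V \<inter> E \<subseteq> U else V \<subseteq> U)))"

lemma openin_simple_extension:
  "openin (simple_extension X E) U \<longleftrightarrow> U \<subseteq> topspace X \<and>
     (\<forall>p\<in>U. \<exists>V. openin X V \<and> p \<in> V \<and> (if p \<in> E then V \<inter> E \<subseteq> U else V \<subseteq> U))"
proof -
  define P where "P U \<longleftrightarrow> (\<forall>p\<in>U. \<exists>V. openin X V \<and> p \<in> V \<and>
     (if p \<in> E then V \<inter> E \<subseteq> U else V \<subseteq> U))" for U
  have Int: "P (U1 \<inter> U2)" if "P U1" "P U2" for U1 U2
    unfolding P_def
  proof
    fix p assume "p \<in> U1 \<inter> U2"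
    with that obtain V1 V2 where "openin X V1" "p \<in> V1" "if p \<in> E then V1 \<inter> E \<subseteq> U1 else V1 \<subseteq> U1"
      and "openin X V2" "p \<in> V2" "if p \<in> E then V2 \<inter> E \<subseteq> U2 else V2 \<subseteq> U2"
      unfolding P_def by blast
    then show "\<exists>V. openin X V \<and> p \<in> V \<and> (if p \<in> E then V \<inter> E \<subseteq> U1 \<inter> U2 else V \<subseteq> U1 \<inter> U2)"
      by (intro exI[of _ "V1 \<inter> V2"]) (auto split: if_splits)
  qed
  have Union: "P (\<Union>K)" if "\<forall>U\<in>K. P U" for K
    unfolding P_def
  proof
    fix p assume "p \<in> \<Union>K"
    then obtain U where U: "U \<in> K" "p \<in> U"
      by blast
    with that obtain V where "openin X V" "p \<in> V" "if p \<in> E then V \<inter> E \<subseteq> U else V \<subseteq> U"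
      unfolding P_def by blast
    then show "\<exists>V. openin X V \<and> p \<in> V \<and> (if p \<in> E then V \<inter> E \<subseteq> \<Union>K else V \<subseteq> \<Union>K)"
      using U by (intro exI[of _ V]) (auto split: if_splits)
  qed
  have "istopology (\<lambda>U. U \<subseteq> topspace X \<and> P U)"
    unfolding istopology_def using Int Union by auto
  then show ?thesis
    unfolding simple_extension_def P_def by simp
qed

lemma topspace_simple_extension [simp]: "topspace (simple_extension X E) = topspace X"
proof -
  have "openin (simple_extension X E) (topspace X)"
    unfolding openin_simple_extension by auto
  then show ?thesis
    by (metis openin_simple_extension openin_subset openin_topspace subset_antisym)
qed

lemma finer_topology_simple_extension: "finer_topology (simple_extension X E) X"
  unfolding finer_topology_def openin_simple_extension
  by (auto simp: openin_subset)

lemma openin_simple_extension_self: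
  "E \<subseteq> topspace X \<Longrightarrow> openin (simple_extension X E) E"
  unfolding openin_simple_extension by auto

lemma maximal_space_not_openin_singleton:
  "maximal_space X \<Longrightarrow> \<not> openin X {p}"
  unfolding maximal_space_def dense_in_itself_def isolated_point_def
  using openin_subset by fastforce

lemma dense_in_itself_open_subtopology:
  assumes "dense_in_itself X" "openin X U"
  shows "dense_in_itself (subtopology X U)"
  using assms openin_open_subtopology[OF assms(2)]
  unfolding dense_in_itself_def isolated_point_def by auto

lemma maximal_space_interior_of_nonempty:
  assumes "t1_space X" "maximal_space X" "S \<subseteq> topspace X" "\<not> closedin X S"
  shows "X interior_of S \<noteq> {}"
proof -
  let ?E = "topspace X - S"
  let ?T = "simple_extension X ?E"
  have "\<not> openin X ?E"
    using assms(3,4) by (simp add: closedin_def)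
  then have "?T \<noteq> X"
    using openin_simple_extension_self[of ?E X] by auto
  then obtain p where "isolated_point ?T p"
    using assms(2) finer_topology_simple_extension unfolding maximal_space_def by blast
  then obtain V where V: "openin X V" "p \<in> V" "if p \<in> ?E then V \<inter> ?E \<subseteq> {p} else V \<subseteq> {p}"
    unfolding isolated_point_def openin_simple_extension by blast
  have "V \<noteq> {p}"
    using V(1) maximal_space_not_openin_singleton[OF assms(2)] by blast
  then have "p \<in> ?E" and "V - {p} \<noteq> {}"
    using V by (auto split: if_splits)
  then have "V - {p} \<subseteq> S"
    using V(3) openin_subset[OF V(1)] by auto
  moreover have "openin X (V - {p})"
    using V(1,2) assms(1) openin_subset
    by (meson openin_diff subsetD t1_space_closedin_singleton)
  ultimately show ?thesis
    using \<open>V - {p} \<noteq> {}\<close> by (metis interior_of_maximal subset_empty)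
qed

lemma maximal_space_in_closure_of_interior_of:
  assumes "t1_space X" "maximal_space X" "A \<subseteq> topspace X" "x \<in> X closure_of A - A"
  shows "x \<in> X closure_of (X interior_of A)"
  unfolding in_closure_of
proof (intro conjI allI impI)
  show x: "x \<in> topspace X"
    using assms(4) in_closure_of by fastforce
  fix W assume W: "x \<in> W \<and> openin X W"
  then have "x \<in> X closure_of (W \<inter> A)"
    using assms(4) openin_Int_closure_of_eq[of X W A] by blast
  then have "\<not> closedin X (W \<inter> A)"
    using assms(4) closure_of_eq by (metis DiffD2 IntD2)
  then have "X interior_of (W \<inter> A) \<noteq> {}"
    using maximal_space_interior_of_nonempty[OF assms(1,2)] assms(3) by blast
  moreover have "X interior_of (W \<inter> A) \<subseteq> W \<inter> X interior_of A"
    using interior_of_mono[of "W \<inter> A" A X] interior_of_subset[of X "W \<inter> A"] by blast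
  ultimately show "\<exists>y. y \<in> X interior_of A \<and> y \<in> W"
    by blast
qed

theorem mainTheorem11:
  fixes X :: "'a topology" and A :: "'a set" and x :: 'a
  assumes "countable (topspace X)" and "t1_space X"
    and "maximal_space X"
    and "A \<subseteq> topspace X"
    and "x \<in> X closure_of A - A"
  shows "\<exists>B. B \<subseteq> A \<and> dense_in_itself (subtopology X B) \<and> x \<in> X closure_of B"
proof (intro exI conjI)
  show "X interior_of A \<subseteq> A"
    by (rule interior_of_subset)
  show "dense_in_itself (subtopology X (X interior_of A))"
    using assms(3) unfolding maximal_space_def by (simp add: dense_in_itself_open_subtopology)
  show "x \<in> X closure_of (X interior_of A)"
    using maximal_space_in_closure_of_interior_of[OF assms(2-5)] .
qed

end
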